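(* Let $p\ge2$, let $A_1,\dots,A_p\subseteq V$ be pairwise disjoint, and let $O_{A_i}$ be an operator on the physical sites of $A_i$. For $\boldsymbol\lambda=(\lambda_1,\dots,\lambda_p)$ let $\mathcal Z^{\mathbf A}_{\boldsymbol\lambda}$ be the network for $\langle\psi|\exp(\sum_i\lambda_iO_{A_i})|\psi\rangle$, expanded with the fixed BP messages of the norm network, with weights $Z_{l,\boldsymbol\lambda}:=\tilde Z^{\boldsymbol\lambda}_{E(l)}/\tilde Z^{\boldsymbol\lambda}_{\emptyset}$ for $l\in\mathcal L_{\mathbf A}$ and $Z^{\mathbf A}_{\mathbf W,\boldsymbol\lambda}:=\prod_iZ_{l_i,\boldsymbol\lambda}^{\eta_i}$. Assume that for $\boldsymbol\lambda$ in a neighborhood of $0$, $\tilde Z^{\boldsymbol\lambda}_\emptyset\neq0$ and $\log\mathcal Z^{\mathbf A}_{\boldsymbol\lambda}=\log\tilde Z^{\boldsymbol\lambda}_\emptyset+\sum_{\mathbf W\text{ connected over }\mathcal L_{\mathbf A}}\phi(\mathbf W)Z^{\mathbf A}_{\mathbf W,\boldsymbol\lambda}$ with a series that can be differentiated term by term at $\boldsymbol\lambda=0$. Then the $p$-point connected correlation function satisfies $$\langle O_{A_1}\cdots O_{A_p}\rangle_c=\sum_{\substack{\mathbf W\text{ connected over }\mathcal L_{\mathbf A}\\ \mathrm{supp}(\mathbf W)\cap A_i\ne\emptyset\ \forall i\in[p]}}\phi(\mathbf W)\,\partial_{\lambda_1}\cdots\partial_{\lambda_p}Z^{\mathbf A}_{\mathbf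 W,\boldsymbol\lambda}\Big|_{\boldsymbol\lambda=0}.$$
   Context: Let $|\psi\rangle$ be a PEPS on a finite graph $G=(V,E)$ with norm network $\mathcal Z=\langle\psi|\psi\rangle>0$. The $p$-point connected correlation function is $\langle O_{A_1}\cdots O_{A_p}\rangle_c:=\partial_{\lambda_1}\cdots\partial_{\lambda_p}\log\langle\psi|\exp(\sum_i\lambda_iO_{A_i})|\psi\rangle\big|_{\boldsymbol\lambda=0}$ (for $p=2$ this is $\langle O_{A_1}O_{A_2}\rangle-\langle O_{A_1}\rangle\langle O_{A_2}\rangle$). Fix a BP fixed point of $\mathcal Z$: messages $\mu_{v\to w}$ with $I_{vw}=\mu_{v\to w}\star\mu_{w\to v}\ne0$ such that each vertex tensor contracted with all incoming messages except from $w$ is proportional to $\mu_{v\to w}$; $\mathcal P^\perp_{vw}=\mathbb 1-\mu_{v\to w}\otimes\mu_{w\to v}/I_{vw}$. For $F\subseteq E$, $\tilde Z^{\boldsymbol\lambda}_F$ is the contraction of $\mathcal Z^{\mathbf A}_{\boldsymbol\lambda}$ with $\mathcal P^\perp$ on edges of $F$ and $\mu\otimes\mu/I$ on the other edges. $\mathcal L_{\mathbf A}$ is the set of connected subgraphs of $G$ with at least one edge in which every vertex not in $A_1\cup\dots\cup A_p$ has degree $\ge2$; supports are vertex sets; compatible = vertex-disjoint. Clusters $\mathbf W=\{(l_i,\eta_i)\}$ are finite multisets of distinct elements of $\mathcal L_{\mathbf A}$ with multiplicities $\eta_i\ge1$, $\mathrm{supp}(\mathbf W)=\bigcup\mathrm{supp}(l_i)$;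 interaction graph: $\eta_i$ vertices per $l_i$, adjacent iff equal or incompatible; connected if it is connected. Ursell function $\phi(\mathbf W)=\frac1{\prod\eta_i!}\sum_C(-1)^{|E(C)|}$ over connected spanning subgraphs $C$ of the interaction graph. *)

theory Defs
  imports "HOL-Analysis.Analysis" "HOL-Library.Multiset"
begin

definition cfg :: "('v \<Rightarrow> nat) \<Rightarrow> 'v set \<Rightarrow> ('v \<Rightarrow> nat) set" where
  "cfg d S = PiE S (\<lambda>v. {..<d v})"

definition mat_id :: "'a \<Rightarrow> 'a \<Rightarrow> complex" where
  "mat_id a b = (if a = b then 1 else 0)"

fun mat_pow :: "'a set \<Rightarrow> ('a \<Rightarrow> 'a \<Rightarrow> complex) \<Rightarrow> nat \<Rightarrow> 'a \<Rightarrow> 'a \<Rightarrow> complex" where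
  "mat_pow C M 0 = mat_id"
| "mat_pow C M (Suc k) = (\<lambda>a b. \<Sum>c\<in>C. M a c * mat_pow C M k c b)"

definition mat_exp :: "'a set \<Rightarrow> ('a \<Rightarrow> 'a \<Rightarrow> complex) \<Rightarrow> 'a \<Rightarrow> 'a \<Rightarrow> complex" where
  "mat_exp C M a b = (\<Sum>k. mat_pow C M k a b / of_nat (fact k))"

text \<open>Graph: vertex set V, edge set E of 2-element subsets. Bond dimension D e on edge e,
  physical dimension d v at vertex v. PEPS tensor T v s b: physical index s, bond indices b
  (restricted to the edges incident to v).\<close>

definition incident :: "'v set set \<Rightarrow> 'v \<Rightarrow> 'v set set" where
  "incident E v = {e \<in> E. v \<in> e}"

definition bonds :: "'v set set \<Rightarrow> ('v set \<Rightarrow> nat) \<Rightarrow> ('v set \<Rightarrow> nat) set" where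
  "bonds E D = PiE E (\<lambda>e. {..<D e})"

definition peps_amp :: "'v set \<Rightarrow> 'v set set \<Rightarrow> ('v set \<Rightarrow> nat)
    \<Rightarrow> ('v \<Rightarrow> nat \<Rightarrow> ('v set \<Rightarrow> nat) \<Rightarrow> complex) \<Rightarrow> ('v \<Rightarrow> nat) \<Rightarrow> complex" where
  "peps_amp V E D T s = (\<Sum>b\<in>bonds E D. \<Prod>v\<in>V. T v (s v) (restrict b (incident E v)))"

text \<open>The generator sum_i lam_i O_{A_i} (each O_{A_i} tensored with the identity
  on the remaining sites), as a matrix on configurations of V.\<close>
definition gen_op :: "'v set \<Rightarrow> nat \<Rightarrow> (nat \<Rightarrow> 'v set)
    \<Rightarrow> (nat \<Rightarrow> ('v \<Rightarrow> nat) \<Rightarrow> ('v \<Rightarrow> nat) \<Rightarrow> complex) \<Rightarrow> (nat \<Rightarrow> real)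
    \<Rightarrow> ('v \<Rightarrow> nat) \<Rightarrow> ('v \<Rightarrow> nat) \<Rightarrow> complex" where
  "gen_op V p A Op lam s' s =
     (\<Sum>i<p. of_real (lam i) * Op i (restrict s' (A i)) (restrict s (A i))
             * (if (\<forall>v\<in>V - A i. s' v = s v) then 1 else 0))"

definition exp_val :: "'v set \<Rightarrow> 'v set set \<Rightarrow> ('v \<Rightarrow> nat) \<Rightarrow> ('v set \<Rightarrow> nat)
    \<Rightarrow> ('v \<Rightarrow> nat \<Rightarrow> ('v set \<Rightarrow> nat) \<Rightarrow> complex) \<Rightarrow> nat \<Rightarrow> (nat \<Rightarrow> 'v set)
    \<Rightarrow> (nat \<Rightarrow> ('v \<Rightarrow> nat) \<Rightarrow> ('v \<Rightarrow> nat) \<Rightarrow> complex) \<Rightarrow> (nat \<Rightarrow> real) \<Rightarrow> complex" where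
  "exp_val V E d D T p A Op lam =
     (\<Sum>s'\<in>cfg d V. \<Sum>s\<in>cfg d V. cnj (peps_amp V E D T s')
        * mat_exp (cfg d V) (gen_op V p A Op lam) s' s * peps_amp V E D T s)"

fun mixed_partial :: "nat list \<Rightarrow> ((nat \<Rightarrow> real) \<Rightarrow> complex) \<Rightarrow> (nat \<Rightarrow> real) \<Rightarrow> complex" where
  "mixed_partial [] f = f"
| "mixed_partial (i # is) f =
     (\<lambda>x. vector_derivative (\<lambda>t. mixed_partial is f (x(i := t))) (at (x i)))"

text \<open>p-point connected correlation function, lam_1..lam_p are lam 0 .. lam (p-1).\<close>
definition conn_corr where
  "conn_corr V E d D T p A Op =
     mixed_partial [0..<p] (\<lambda>lam. Ln (exp_val V E d D T p A Op lam)) (\<lambda>_. 0)"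

definition dd :: "('v set \<Rightarrow> nat) \<Rightarrow> 'v set \<Rightarrow> (nat \<times> nat) set" where
  "dd D e = {..<D e} \<times> {..<D e}"

text \<open>Vertex tensor of the norm network; y assigns a doubled (bra,ket) bond index to each
  incident edge.\<close>
definition local_norm :: "'v set set \<Rightarrow> ('v \<Rightarrow> nat) \<Rightarrow> ('v \<Rightarrow> nat \<Rightarrow> ('v set \<Rightarrow> nat) \<Rightarrow> complex)
    \<Rightarrow> 'v \<Rightarrow> ('v set \<Rightarrow> nat \<times> nat) \<Rightarrow> complex" where
  "local_norm E d T v y =
     (\<Sum>s<d v. cnj (T v s (restrict (\<lambda>e. fst (y e)) (incident E v)))
              * T v s (restrict (\<lambda>e. snd (y e)) (incident E v)))"

text \<open>mu v w is the message from v to w, a vector on the doubled index space of edge {v,w}.\<close>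
definition bp_I :: "('v set \<Rightarrow> nat) \<Rightarrow> ('v \<Rightarrow> 'v \<Rightarrow> nat \<times> nat \<Rightarrow> complex) \<Rightarrow> 'v \<Rightarrow> 'v \<Rightarrow> complex" where
  "bp_I D mu v w = (\<Sum>x\<in>dd D {v,w}. mu v w x * mu w v x)"

definition is_bp_fixed_point :: "'v set set \<Rightarrow> ('v \<Rightarrow> nat) \<Rightarrow> ('v set \<Rightarrow> nat)
    \<Rightarrow> ('v \<Rightarrow> nat \<Rightarrow> ('v set \<Rightarrow> nat) \<Rightarrow> complex) \<Rightarrow> ('v \<Rightarrow> 'v \<Rightarrow> nat \<times> nat \<Rightarrow> complex) \<Rightarrow> bool" where
  "is_bp_fixed_point E d D T mu =
     (\<forall>v w. {v,w} \<in> E \<longrightarrow> (\<exists>c::complex. \<forall>x\<in>dd D {v,w}.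
        (\<Sum>y\<in>{y \<in> PiE (incident E v) (dd D). y {v,w} = x}.
            local_norm E d T v y * (\<Prod>u\<in>{u. {u,v} \<in> E \<and> u \<noteq> w}. mu u v (y {u,v})))
        = c * mu v w x))"

definition end1 :: "'v set \<Rightarrow> 'v" where "end1 e = (SOME v. v \<in> e)"
definition end2 :: "'v set \<Rightarrow> 'v" where "end2 e = (SOME w. w \<in> e \<and> w \<noteq> end1 e)"

text \<open>Half-edge index assignments: h (v,e) is the doubled index of edge e on the side of v.\<close>
definition hconfs :: "'v set set \<Rightarrow> ('v set \<Rightarrow> nat) \<Rightarrow> ('v \<times> 'v set \<Rightarrow> nat \<times> nat) set" where
  "hconfs E D = PiE {(v,e). e \<in> E \<and> v \<in> e} (\<lambda>(v,e). dd D e)"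

text \<open>Rank-one projector mu_{v->w} (x) mu_{w->v} / I_{vw} on edge e={v,w}: leg at v contracted
  with the incoming message mu_{w->v}, leg at w with mu_{v->w}. (Symmetric in v,w.)\<close>
definition rank1 :: "('v set \<Rightarrow> nat) \<Rightarrow> ('v \<Rightarrow> 'v \<Rightarrow> nat \<times> nat \<Rightarrow> complex) \<Rightarrow> 'v set
    \<Rightarrow> ('v \<times> 'v set \<Rightarrow> nat \<times> nat) \<Rightarrow> complex" where
  "rank1 D mu e h = mu (end2 e) (end1 e) (h (end1 e, e)) * mu (end1 e) (end2 e) (h (end2 e, e))
                    / bp_I D mu (end1 e) (end2 e)"

definition perp :: "('v set \<Rightarrow> nat) \<Rightarrow> ('v \<Rightarrow> 'v \<Rightarrow> nat \<times> nat \<Rightarrow> complex) \<Rightarrow> 'v set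
    \<Rightarrow> ('v \<times> 'v set \<Rightarrow> nat \<times> nat) \<Rightarrow> complex" where
  "perp D mu e h = (if h (end1 e, e) = h (end2 e, e) then 1 else 0) - rank1 D mu e h"

definition block_tensor :: "'v set set \<Rightarrow> ('v \<Rightarrow> nat) \<Rightarrow> ('v \<Rightarrow> nat \<Rightarrow> ('v set \<Rightarrow> nat) \<Rightarrow> complex)
    \<Rightarrow> 'v set \<Rightarrow> (('v \<Rightarrow> nat) \<Rightarrow> ('v \<Rightarrow> nat) \<Rightarrow> complex) \<Rightarrow> ('v \<times> 'v set \<Rightarrow> nat \<times> nat) \<Rightarrow> complex" where
  "block_tensor E d T S M h =
     (\<Sum>s'\<in>cfg d S. \<Sum>s\<in>cfg d S.
        (\<Prod>v\<in>S. cnj (T v (s' v) (restrict (\<lambda>e. fst (h (v,e))) (incident E v))))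
        * mat_exp (cfg d S) M s' s
        * (\<Prod>v\<in>S. T v (s v) (restrict (\<lambda>e. snd (h (v,e))) (incident E v))))"

definition Ztilde :: "'v set \<Rightarrow> 'v set set \<Rightarrow> ('v \<Rightarrow> nat) \<Rightarrow> ('v set \<Rightarrow> nat)
    \<Rightarrow> ('v \<Rightarrow> nat \<Rightarrow> ('v set \<Rightarrow> nat) \<Rightarrow> complex) \<Rightarrow> ('v \<Rightarrow> 'v \<Rightarrow> nat \<times> nat \<Rightarrow> complex)
    \<Rightarrow> nat \<Rightarrow> (nat \<Rightarrow> 'v set) \<Rightarrow> (nat \<Rightarrow> ('v \<Rightarrow> nat) \<Rightarrow> ('v \<Rightarrow> nat) \<Rightarrow> complex)
    \<Rightarrow> 'v set set \<Rightarrow> (nat \<Rightarrow> real) \<Rightarrow> complex" where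
  "Ztilde V E d D T mu p A Op F lam =
     (\<Sum>h\<in>hconfs E D.
        (\<Prod>v\<in>V - (\<Union>i<p. A i). local_norm E d T v (\<lambda>e. h (v,e)))
      * (\<Prod>i<p. block_tensor E d T (A i) (\<lambda>a b. of_real (lam i) * Op i a b) h)
      * (\<Prod>e\<in>E. if e \<in> F then perp D mu e h else rank1 D mu e h))"

text \<open>A subgraph with at least one edge and no isolated vertices is represented by its edge
  set F; its vertex set (support) is the union of F.\<close>
definition edges_connected :: "'v set set \<Rightarrow> bool" where
  "edges_connected F = (\<forall>u\<in>\<Union>F. \<forall>w\<in>\<Union>F. (u,w) \<in> {(x,y). {x,y} \<in> F}\<^sup>*)"

definition polymers :: "'v set set \<Rightarrow> nat \<Rightarrow> (nat \<Rightarrow> 'v set) \<Rightarrow> 'v set set set" where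
  "polymers E p A = {F. F \<subseteq> E \<and> F \<noteq> {} \<and> edges_connected F \<and>
       (\<forall>v\<in>\<Union>F - (\<Union>i<p. A i). 2 \<le> card {e\<in>F. v \<in> e})}"

definition incompatible :: "'v set set \<Rightarrow> 'v set set \<Rightarrow> bool" where
  "incompatible l l' = (\<Union>l \<inter> \<Union>l' \<noteq> {})"

text \<open>Interaction graph of a labelled cluster (list of polymers): one vertex per copy.\<close>
definition inter_edges :: "'v set set list \<Rightarrow> nat set set" where
  "inter_edges xs = {{j,k} | j k. j < length xs \<and> k < length xs \<and> j \<noteq> k \<and>
                       (xs ! j = xs ! k \<or> incompatible (xs ! j) (xs ! k))}"

definition graph_connected :: "nat set \<Rightarrow> nat set set \<Rightarrow> bool" where
  "graph_connected N C = (\<forall>j\<in>N. \<forall>k\<in>N. (j,k) \<in> {(x,y). {x,y} \<in> C}\<^sup>*)"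

definition cluster_connected :: "'v set set multiset \<Rightarrow> bool" where
  "cluster_connected W = (W \<noteq> {#} \<and>
     graph_connected {..<size W} (inter_edges (SOME xs. mset xs = W)))"

definition ursell :: "'v set set multiset \<Rightarrow> real" where
  "ursell W = (let xs = (SOME xs. mset xs = W) in
     (\<Sum>C\<in>{C. C \<subseteq> inter_edges xs \<and> graph_connected {..<length xs} C}. (-1::real) ^ card C)
     / (\<Prod>l\<in>set_mset W. fact (count W l)))"

definition conn_clusters :: "'v set set \<Rightarrow> nat \<Rightarrow> (nat \<Rightarrow> 'v set) \<Rightarrow> 'v set set multiset set" where
  "conn_clusters E p A = {W. set_mset W \<subseteq> polymers E p A \<and> cluster_connected W}"

definition cluster_supp :: "'v set set multiset \<Rightarrow> 'v set" where
  "cluster_supp W = (\<Union>l\<in>set_mset W. \<Union>l)"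

definition cluster_weight where
  "cluster_weight V E d D T mu p A Op W lam =
     prod_mset (image_mset (\<lambda>l. Ztilde V E d D T mu p A Op l lam / Ztilde V E d D T mu p A Op {} lam) W)"

definition nbhd0 :: "nat \<Rightarrow> real \<Rightarrow> (nat \<Rightarrow> real) set" where
  "nbhd0 p \<epsilon> = {lam. \<forall>i<p. \<bar>lam i\<bar> < \<epsilon>}"

end

theory Submission
  imports Defs "HOL-Complex_Analysis.Complex_Analysis"
begin

(*
  Suppose a cluster W misses the block A_j.  Every edge touching A_j then lies outside the edge
  sets of the polymers of W and carries the rank-one projector, which is a product of the two BP
  messages entering its endpoints.  Hence, for every F avoiding A_j, the projected network
  tilde Z_F factorises as B_j(lam_j) * R_F(lam), where B_j is the block A_j contracted with the
  messages entering it and R_F does not depend on lam_j.  The factor B_j cancels in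
  Z_l = tilde Z_E(l) / tilde Z_empty, so the weight of W does not depend on lam_j and its mixed
  derivative vanishes.

  The same factorisation with F empty shows that d/dlam_p log tilde Z_empty = B_p'(lam_p)/B_p(lam_p)
  depends on lam_p alone; since p >= 2 it is killed by d/dlam_(p-1), so the p-th mixed
  derivative of log Z^A equals that of the cluster series, which is computed termwise.
*)

section \<open>Mixed partial derivatives\<close>

lemma eventually_fun_upd_in_nbhd0:
  assumes "x \<in> nbhd0 p \<delta>"
  shows "\<forall>\<^sub>F s in nhds (x i). x(i := s) \<in> nbhd0 p \<delta>"
proof (cases "i < p")
  case True
  then have "x i \<in> {s. \<bar>s\<bar> < \<delta>}" using assms by (simp add: nbhd0_def)
  moreover have "open {s::real. \<bar>s\<bar> < \<delta>}"
    by (intro open_Collect_less continuous_intros)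
  ultimately have "\<forall>\<^sub>F s in nhds (x i). \<bar>s\<bar> < \<delta>"
    using eventually_nhds_in_open by (metis (mono_tags) eventually_mono mem_Collect_eq)
  then show ?thesis by eventually_elim (use assms in \<open>auto simp: nbhd0_def\<close>)
next
  case False
  then show ?thesis using assms by (simp add: nbhd0_def)
qed

lemma vector_derivative_add_const:
  fixes g :: "real \<Rightarrow> 'a::real_normed_vector"
  shows "vector_derivative (\<lambda>s. c + g s) (at t) = vector_derivative g (at t)"
  unfolding vector_derivative_def using has_vector_derivative_add_const[of g c]
  by (simp add: add.commute)

lemma mixed_partial_append: "mixed_partial (xs @ ys) f = mixed_partial xs (mixed_partial ys f)"
  by (induction xs) auto

lemma mixed_partial_zero: "mixed_partial xs (\<lambda>x. 0) = (\<lambda>x. 0)"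
  by (induction xs) auto

lemma mixed_partial_fun_upd_indep:
  assumes "\<And>x t. f (x(j := t)) = f x"
  shows "mixed_partial xs f (x(j := t)) = mixed_partial xs f x"
proof (induction xs arbitrary: x t)
  case Nil
  show ?case by (simp only: mixed_partial.simps(1) assms)
next
  case (Cons i xs)
  show ?case
  proof (cases "i = j")
    case False
    then have "(\<lambda>s. mixed_partial xs f (x(j := t, i := s))) = (\<lambda>s. mixed_partial xs f (x(i := s)))"
      by (metis fun_upd_twist Cons.IH)
    moreover have "(x(j := t)) i = x i" using False by simp
    ultimately show ?thesis by (simp only: mixed_partial.simps)
  qed (simp add: Cons.IH)
qed

lemma mixed_partial_eq_0_if_indep:
  assumes "\<And>x t. f (x(j := t)) = f x" and "j \<in> set xs"
  shows "mixed_partial xs f x = 0"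
proof -
  obtain as bs where xs: "xs = as @ j # bs" using assms(2) split_list by metis
  have "mixed_partial (j # bs) f = (\<lambda>x. 0)"
    by (simp add: mixed_partial_fun_upd_indep[OF assms(1)])
  then show ?thesis by (simp add: xs mixed_partial_append mixed_partial_zero)
qed

lemma mixed_partial_cong_nbhd0:
  assumes "\<And>y. y \<in> nbhd0 p \<delta> \<Longrightarrow> f y = g y" and "x \<in> nbhd0 p \<delta>"
  shows "mixed_partial xs f x = mixed_partial xs g x"
  using assms(2)
proof (induction xs arbitrary: x)
  case Nil
  then show ?case using assms(1) by simp
next
  case (Cons i xs)
  have "\<forall>\<^sub>F s in nhds (x i). s \<in> UNIV \<longrightarrow> mixed_partial xs f (x(i := s)) = mixed_partial xs g (x(i := s))"
    using eventually_fun_upd_in_nbhd0[OF Cons.prems] by eventually_elim (use Cons.IH in blast)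
  then show ?case by (simp add: vector_derivative_cong_eq)
qed

lemma mixed_partial_pair_eq_if_diff_single_var:
  assumes "\<And>y. y \<in> nbhd0 p \<delta> \<Longrightarrow> mixed_partial [k] f y = \<phi> (y k) + mixed_partial [k] g y"
    and "i \<noteq> k" and "x \<in> nbhd0 p \<delta>"
  shows "mixed_partial [i, k] f x = mixed_partial [i, k] g x"
proof -
  have ev: "\<forall>\<^sub>F s in nhds (x i). s \<in> UNIV \<longrightarrow>
      mixed_partial [k] f (x(i := s)) = \<phi> (x k) + mixed_partial [k] g (x(i := s))"
    using eventually_fun_upd_in_nbhd0[OF assms(3)]
  proof eventually_elim
    case (elim s)
    from assms(1)[OF elim] assms(2) show ?case by simp
  qed
  have "mixed_partial [i, k] f x = vector_derivative (\<lambda>s. mixed_partial [k] f (x(i := s))) (at (x i))"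
    by (simp only: mixed_partial.simps(2)[of i "[k]"])
  also have "\<dots> = vector_derivative (\<lambda>s. \<phi> (x k) + mixed_partial [k] g (x(i := s))) (at (x i))"
    by (rule vector_derivative_cong_eq) (use ev in auto)
  also have "\<dots> = mixed_partial [i, k] g x"
    by (simp only: vector_derivative_add_const mixed_partial.simps(2)[of i "[k]"])
  finally show ?thesis .
qed

lemma upt_eq_append_two_last:
  assumes "2 \<le> p"
  shows "[0..<p] = [0..<p - 2] @ [p - 2, p - 1]"
proof -
  obtain q where "p = q + 2" using assms le_Suc_ex add.commute by metis
  then show ?thesis by simp
qed

lemma has_vector_derivative_continuous_log:
  fixes g h :: "real \<Rightarrow> complex"
  assumes cont: "continuous (at t) g"
    and exp_eq: "\<forall>\<^sub>F s in nhds t. exp (g s) = h s"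
    and h_deriv: "(h has_vector_derivative h') (at t)" and nz: "h t \<noteq> 0"
  shows "(g has_vector_derivative h' / h t) (at t)"
proof -
  define q where "q s = Ln (h s / h t) + g t" for s
  have "((\<lambda>s. h s / h t) has_vector_derivative h' / h t) (at t)"
    using h_deriv by (rule has_vector_derivative_divide)
  moreover have "(Ln has_field_derivative 1) (at (h t / h t))"
    using has_field_derivative_Ln[of 1] nz by simp
  ultimately have "((Ln \<circ> (\<lambda>s. h s / h t)) has_vector_derivative h' / h t * 1) (at t)"
    by (rule field_vector_diff_chain_at)
  then have q_deriv: "(q has_vector_derivative h' / h t) (at t)"
    unfolding q_def o_def by (simp only: has_vector_derivative_add_const mult_1_right)
  have exp_t: "exp (g t) = h t" using exp_eq by (rule eventually_nhds_x_imp_x)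
  have "\<forall>\<^sub>F s in at t. dist (g s) (g t) < pi"
    using cont unfolding continuous_at by (rule tendstoD) simp
  moreover have "\<forall>\<^sub>F s in at t. exp (g s) = h s"
    using exp_eq unfolding eventually_at_filter by (rule eventually_mono) simp
  ultimately have "\<forall>\<^sub>F s in at t. g s = q s"
  proof eventually_elim
    case (elim s)
    have "\<bar>Im (g s - g t)\<bar> < pi"
      using elim(1) abs_Im_le_cmod[of "g s - g t"] by (simp add: dist_norm)
    moreover have "exp (g s - g t) = h s / h t" using elim(2) exp_t by (simp add: exp_diff)
    ultimately have "Ln (h s / h t) = g s - g t"
      using Ln_exp[of "g s - g t"] by (simp add: abs_less_iff)
    then show ?case by (simp add: q_def)
  qed
  then have "\<forall>\<^sub>F s in nhds t. s \<in> UNIV \<longrightarrow> q s = g s"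
    unfolding eventually_at_filter by (rule eventually_mono) (auto simp: q_def nz)
  moreover have "q t = g t" by (simp add: q_def nz)
  ultimately show ?thesis using q_deriv has_vector_derivative_cong_ev[where f = q and g = g and S = UNIV] by simp
qed

lemma has_vector_derivative_Ln_real_line:
  assumes "f holomorphic_on UNIV" and "Re (f (of_real t)) > 0"
  shows "((\<lambda>s. Ln (f (of_real s))) has_vector_derivative deriv f (of_real t) / f (of_real t)) (at t)"
proof -
  have "f (of_real t) \<notin> \<real>\<^sub>\<le>\<^sub>0" using assms(2) by (simp add: complex_nonpos_Reals_iff)
  then have "((\<lambda>z. Ln (f z)) has_field_derivative inverse (f (of_real t)) * deriv f (of_real t))
      (at (of_real t))"
    by (intro DERIV_chain2[OF has_field_derivative_Ln] holomorphic_derivI[OF assms(1)]) auto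
  then have "((\<lambda>s. Ln (f (of_real s))) has_vector_derivative inverse (f (of_real t)) * deriv f (of_real t))
      (at t)"
    by (rule has_vector_derivative_real_field)
  then show ?thesis by (simp add: field_simps)
qed

section \<open>The matrix exponential\<close>

definition mat_norm1 :: "'a set \<Rightarrow> ('a \<Rightarrow> 'a \<Rightarrow> complex) \<Rightarrow> real" where
  "mat_norm1 C M = (\<Sum>a\<in>C. \<Sum>b\<in>C. cmod (M a b))"

lemma mat_norm1_nonneg: "mat_norm1 C M \<ge> 0"
  unfolding mat_norm1_def by (intro sum_nonneg) auto

lemma norm_mat_pow_le:
  assumes "finite C" and "a \<in> C"
  shows "cmod (mat_pow C M k a b) \<le> mat_norm1 C M ^ k"
  using assms(2)
proof (induction k arbitrary: a)
  case 0
  then show ?case by (simp add: mat_id_def)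
next
  case (Suc k)
  have row: "(\<Sum>c\<in>C. cmod (M a c)) \<le> mat_norm1 C M"
    unfolding mat_norm1_def using assms(1) Suc.prems
    by (intro member_le_sum[where f = "\<lambda>a. \<Sum>c\<in>C. cmod (M a c)"]) (auto intro: sum_nonneg)
  have "cmod (mat_pow C M (Suc k) a b) \<le> (\<Sum>c\<in>C. cmod (M a c * mat_pow C M k c b))"
    by (simp add: norm_sum)
  also have "\<dots> \<le> (\<Sum>c\<in>C. cmod (M a c) * mat_norm1 C M ^ k)"
    unfolding norm_mult by (intro sum_mono mult_left_mono Suc.IH) auto
  also have "\<dots> \<le> mat_norm1 C M * mat_norm1 C M ^ k"
    using row by (simp add: sum_distrib_right[symmetric] mult_right_mono mat_norm1_nonneg)
  finally show ?case by simp
qed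

lemma norm_mat_exp_term_le:
  assumes "finite C" and "a \<in> C"
  shows "norm (mat_pow C M k a b / of_nat (fact k)) \<le> mat_norm1 C M ^ k / fact k"
  using norm_mat_pow_le[OF assms] by (simp add: norm_divide divide_right_mono)

lemma summable_exp_series: "summable (\<lambda>k. (x::real) ^ k / fact k)"
  using summable_exp[of x] by (simp add: field_simps)

lemma mat_exp_sums:
  assumes "finite C" and "a \<in> C"
  shows "(\<lambda>k. mat_pow C M k a b / of_nat (fact k)) sums mat_exp C M a b"
proof -
  have "summable (\<lambda>k. mat_pow C M k a b / of_nat (fact k))"
    by (rule summable_comparison_test'[OF summable_exp_series, where N = 0])
       (use norm_mat_exp_term_le[OF assms] in blast)
  then show ?thesis by (simp add: mat_exp_def summable_sums)
qed

lemma norm_mat_exp_minus_id_le: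
  assumes "finite C" and "a \<in> C"
  shows "cmod (mat_exp C M a b - mat_id a b) \<le> exp (mat_norm1 C M) - 1"
proof -
  have "(\<lambda>k. mat_pow C M (Suc k) a b / of_nat (fact (Suc k))) sums (mat_exp C M a b - mat_id a b)"
    using mat_exp_sums[OF assms] by (subst sums_Suc_iff) simp
  moreover have "(\<lambda>k. mat_norm1 C M ^ Suc k / fact (Suc k)) sums (exp (mat_norm1 C M) - 1)"
    using exp_converges[of "mat_norm1 C M"]
    by (subst sums_Suc_iff) (simp add: divide_inverse mult.commute del: fact_Suc power_Suc)
  ultimately show ?thesis
    using norm_mat_exp_term_le[OF assms] by (rule norm_sums_le)
qed

lemma mat_norm1_sum_le: "mat_norm1 C (\<lambda>a b. \<Sum>i\<in>I. M i a b) \<le> (\<Sum>i\<in>I. mat_norm1 C (M i))"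
proof -
  have "mat_norm1 C (\<lambda>a b. \<Sum>i\<in>I. M i a b) \<le> (\<Sum>a\<in>C. \<Sum>b\<in>C. \<Sum>i\<in>I. cmod (M i a b))"
    unfolding mat_norm1_def by (intro sum_mono norm_sum)
  also have "\<dots> = (\<Sum>a\<in>C. \<Sum>i\<in>I. \<Sum>b\<in>C. cmod (M i a b))"
    by (intro sum.cong refl sum.swap)
  also have "\<dots> = (\<Sum>i\<in>I. mat_norm1 C (M i))"
    unfolding mat_norm1_def by (rule sum.swap)
  finally show ?thesis .
qed

lemma mat_norm1_scale: "mat_norm1 C (\<lambda>a b. c * M a b) = cmod c * mat_norm1 C M"
  unfolding mat_norm1_def by (simp add: norm_mult sum_distrib_left)

lemma mat_pow_affine_holomorphic:
  "(\<lambda>z. mat_pow C (\<lambda>a b. z * M a b + N a b) k a b) holomorphic_on S"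
proof (induction k arbitrary: a)
  case (Suc k)
  then show ?case by (auto intro!: holomorphic_intros)
qed simp

lemma mat_norm1_affine_le:
  "mat_norm1 C (\<lambda>a b. z * M a b + N a b) \<le> cmod z * mat_norm1 C M + mat_norm1 C N"
proof -
  have "mat_norm1 C (\<lambda>a b. z * M a b + N a b) \<le> (\<Sum>a\<in>C. \<Sum>b\<in>C. cmod z * cmod (M a b) + cmod (N a b))"
    unfolding mat_norm1_def by (intro sum_mono) (metis norm_mult norm_triangle_ineq)
  also have "\<dots> = cmod z * mat_norm1 C M + mat_norm1 C N"
    by (simp add: mat_norm1_def sum.distrib sum_distrib_left)
  finally show ?thesis .
qed

lemma mat_exp_affine_holomorphic:
  assumes "finite C" and "a \<in> C"
  shows "(\<lambda>z. mat_exp C (\<lambda>a b. z * M a b + N a b) a b) holomorphic_on UNIV"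
proof -
  define f where "f k z = mat_pow C (\<lambda>a b. z * M a b + N a b) k a b / of_nat (fact k)" for k z
  have "(\<lambda>z. \<Sum>k. f k z) holomorphic_on ball 0 r" for r
  proof -
    define R where "R = r * mat_norm1 C M + mat_norm1 C N"
    have ulim: "uniform_limit (cball 0 r) (\<lambda>n z. \<Sum>k<n. f k z) (\<lambda>z. \<Sum>k. f k z) sequentially"
    proof (rule Weierstrass_m_test[OF _ summable_exp_series])
      fix k z assume "z \<in> cball (0::complex) r"
      then have zR: "mat_norm1 C (\<lambda>a b. z * M a b + N a b) \<le> R"
        using mat_norm1_affine_le[of C z M N] mult_right_mono[OF _ mat_norm1_nonneg, of "cmod z" r C M]
        by (simp add: R_def)
      have "norm (f k z) \<le> mat_norm1 C (\<lambda>a b. z * M a b + N a b) ^ k / fact k"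
        unfolding f_def by (rule norm_mat_exp_term_le[OF assms])
      also have "\<dots> \<le> R ^ k / fact k"
        using zR by (intro divide_right_mono power_mono) (auto simp: mat_norm1_nonneg)
      finally show "norm (f k z) \<le> R ^ k / fact k" .
    qed
    have cont: "\<forall>\<^sub>F n in sequentially. continuous_on (cball 0 r) (\<lambda>z. \<Sum>k<n. f k z) \<and>
        (\<lambda>z. \<Sum>k<n. f k z) holomorphic_on ball 0 r"
    proof (intro always_eventually allI conjI)
      fix n
      have "(\<lambda>z. \<Sum>k<n. f k z) holomorphic_on UNIV"
        unfolding f_def by (intro holomorphic_intros mat_pow_affine_holomorphic) simp
      then show "continuous_on (cball 0 r) (\<lambda>z. \<Sum>k<n. f k z)"
        and "(\<lambda>z. \<Sum>k<n. f k z) holomorphic_on ball 0 r"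
        by (meson holomorphic_on_imp_continuous_on holomorphic_on_subset subset_UNIV)+
    qed
    show ?thesis
      using holomorphic_uniform_limit[OF cont ulim trivial_limit_sequentially] by blast
  qed
  then have "(\<lambda>z. \<Sum>k. f k z) holomorphic_on (\<Union>r. ball 0 r)"
    by (intro holomorphic_on_UN_open) auto
  moreover have "(\<Union>r. ball (0::complex) r) = UNIV"
    by (auto intro: gt_ex)
  ultimately show ?thesis by (simp add: f_def mat_exp_def)
qed

lemma norm_quadratic_form_mat_exp_le:
  assumes "finite C"
  shows "cmod ((\<Sum>a\<in>C. \<Sum>b\<in>C. cnj (x a) * mat_exp C M a b * x b) - of_real (\<Sum>a\<in>C. (cmod (x a))\<^sup>2))
      \<le> (\<Sum>a\<in>C. cmod (x a))\<^sup>2 * (exp (mat_norm1 C M) - 1)"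
proof -
  have id: "(\<Sum>a\<in>C. \<Sum>b\<in>C. cnj (x a) * mat_id a b * x b) = of_real (\<Sum>a\<in>C. (cmod (x a))\<^sup>2)"
  proof -
    have "(\<Sum>a\<in>C. \<Sum>b\<in>C. cnj (x a) * mat_id a b * x b) = (\<Sum>a\<in>C. x a * cnj (x a))"
      using assms by (simp add: mat_id_def if_distrib if_distribR sum.delta mult.commute cong: if_cong)
    then show ?thesis unfolding of_real_sum complex_norm_square .
  qed
  have "cmod ((\<Sum>a\<in>C. \<Sum>b\<in>C. cnj (x a) * mat_exp C M a b * x b) - of_real (\<Sum>a\<in>C. (cmod (x a))\<^sup>2))
      = cmod (\<Sum>a\<in>C. \<Sum>b\<in>C. cnj (x a) * (mat_exp C M a b - mat_id a b) * x b)"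
    unfolding id[symmetric] by (simp add: sum_subtractf algebra_simps)
  also have "\<dots> \<le> (\<Sum>a\<in>C. \<Sum>b\<in>C. cmod (x a) * (exp (mat_norm1 C M) - 1) * cmod (x b))"
  proof (intro order.trans[OF norm_sum] sum_mono)
    fix a b assume "a \<in> C"
    then have "cmod (mat_exp C M a b - mat_id a b) \<le> exp (mat_norm1 C M) - 1"
      by (rule norm_mat_exp_minus_id_le[OF assms])
    then show "cmod (cnj (x a) * (mat_exp C M a b - mat_id a b) * x b)
        \<le> cmod (x a) * (exp (mat_norm1 C M) - 1) * cmod (x b)"
      by (simp add: norm_mult mult_left_mono mult_right_mono)
  qed
  also have "\<dots> = (\<Sum>a\<in>C. cmod (x a))\<^sup>2 * (exp (mat_norm1 C M) - 1)"
    by (simp add: power2_eq_square sum_distrib_left sum_distrib_right mult_ac)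
  finally show ?thesis .
qed

definition embed_op :: "'v set \<Rightarrow> 'v set \<Rightarrow> (('v \<Rightarrow> nat) \<Rightarrow> ('v \<Rightarrow> nat) \<Rightarrow> complex)
    \<Rightarrow> ('v \<Rightarrow> nat) \<Rightarrow> ('v \<Rightarrow> nat) \<Rightarrow> complex" where
  "embed_op V S X s' s = X (restrict s' S) (restrict s S) * (if \<forall>v\<in>V - S. s' v = s v then 1 else 0)"

lemma gen_op_eq_sum_embed_op:
  "gen_op V p A Op lam s' s = (\<Sum>i<p. of_real (lam i) * embed_op V (A i) (Op i) s' s)"
  unfolding gen_op_def embed_op_def by (simp add: mult.assoc)

lemma finite_cfg: "finite S \<Longrightarrow> finite (cfg d S)"
  unfolding cfg_def by (intro finite_PiE) auto

lemma exp_val_coordinate_line: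
  assumes "finite V" and "k < p"
  obtains f where "f holomorphic_on UNIV"
    and "\<And>t. exp_val V E d D T p A Op (y(k := t)) = f (of_real t)"
proof
  define C where "C = cfg d V"
  define M where "M = embed_op V (A k) (Op k)"
  define N where "N s' s = (\<Sum>i\<in>{..<p} - {k}. of_real (y i) * embed_op V (A i) (Op i) s' s)" for s' s
  define f where "f z = (\<Sum>s'\<in>C. \<Sum>s\<in>C. cnj (peps_amp V E D T s')
      * mat_exp C (\<lambda>a b. z * M a b + N a b) s' s * peps_amp V E D T s)" for z
  show "f holomorphic_on UNIV"
    unfolding f_def C_def
    by (intro holomorphic_intros mat_exp_affine_holomorphic finite_cfg assms(1)) auto
  have "gen_op V p A Op (y(k := t)) = (\<lambda>a b. of_real t * M a b + N a b)" for t
  proof (intro ext)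
    fix s' s
    have "gen_op V p A Op (y(k := t)) s' s
        = of_real t * M s' s + (\<Sum>i\<in>{..<p} - {k}. of_real ((y(k := t)) i) * embed_op V (A i) (Op i) s' s)"
      unfolding gen_op_eq_sum_embed_op M_def using assms(2) by (simp add: sum.remove)
    also have "(\<Sum>i\<in>{..<p} - {k}. of_real ((y(k := t)) i) * embed_op V (A i) (Op i) s' s) = N s' s"
      unfolding N_def by (rule sum.cong) auto
    finally show "gen_op V p A Op (y(k := t)) s' s = of_real t * M s' s + N s' s" .
  qed
  then show "exp_val V E d D T p A Op (y(k := t)) = f (of_real t)" for t
    by (simp add: exp_val_def f_def C_def)
qed

lemma mat_norm1_gen_op_le:
  assumes "y \<in> nbhd0 p \<delta>"
  shows "mat_norm1 C (gen_op V p A Op y) \<le> \<delta> * (\<Sum>i<p. mat_norm1 C (embed_op V (A i) (Op i)))"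
proof -
  have "mat_norm1 C (gen_op V p A Op y) \<le> (\<Sum>i<p. \<bar>y i\<bar> * mat_norm1 C (embed_op V (A i) (Op i)))"
    using mat_norm1_sum_le[of C "\<lambda>i a b. of_real (y i) * embed_op V (A i) (Op i) a b" "{..<p}"]
    by (simp add: gen_op_eq_sum_embed_op[abs_def] mat_norm1_scale)
  also have "\<dots> \<le> (\<Sum>i<p. \<delta> * mat_norm1 C (embed_op V (A i) (Op i)))"
    using assms by (intro sum_mono mult_right_mono mat_norm1_nonneg) (auto simp: nbhd0_def)
  finally show ?thesis by (simp add: sum_distrib_left)
qed

lemma exp_val_Re_pos_near_0:
  assumes "finite V" and norm_pos: "(\<Sum>s\<in>cfg d V. (cmod (peps_amp V E D T s))\<^sup>2) > 0"
  obtains \<delta> where "\<delta> > 0" and "\<And>y. y \<in> nbhd0 p \<delta> \<Longrightarrow> Re (exp_val V E d D T p A Op y) > 0"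
proof -
  define C where "C = cfg d V"
  define x where "x = peps_amp V E D T"
  define N0 where "N0 = (\<Sum>s\<in>C. (cmod (x s))\<^sup>2)"
  define \<Psi> where "\<Psi> = (\<Sum>s\<in>C. cmod (x s))\<^sup>2"
  define K where "K = (\<Sum>i<p. mat_norm1 C (embed_op V (A i) (Op i)))"
  have "((\<lambda>\<delta>. \<Psi> * (exp (\<delta> * K) - 1)) \<longlongrightarrow> \<Psi> * (exp (0 * K) - 1)) (at_right 0)"
    by (intro tendsto_intros)
  then have "\<forall>\<^sub>F \<delta> in at_right 0. \<Psi> * (exp (\<delta> * K) - 1) < N0"
    using norm_pos by (intro order_tendstoD) (simp_all add: N0_def C_def x_def)
  then have "\<forall>\<^sub>F \<delta> in at_right 0. \<delta> > 0 \<and> \<Psi> * (exp (\<delta> * K) - 1) < N0"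
    using eventually_at_right_less by (rule eventually_conj[rotated])
  then obtain \<delta> where \<delta>: "\<delta> > 0" "\<Psi> * (exp (\<delta> * K) - 1) < N0"
    using eventually_happens[of _ "at_right (0::real)"] by auto
  show thesis
  proof (rule that[OF \<delta>(1)])
    fix y assume y: "y \<in> nbhd0 p \<delta>"
    have "cmod (exp_val V E d D T p A Op y - of_real N0)
        \<le> \<Psi> * (exp (mat_norm1 C (gen_op V p A Op y)) - 1)"
      unfolding exp_val_def C_def x_def N0_def \<Psi>_def
      by (rule norm_quadratic_form_mat_exp_le[OF finite_cfg[OF assms(1)]])
    also have "\<dots> \<le> \<Psi> * (exp (\<delta> * K) - 1)"
      using mat_norm1_gen_op_le[OF y] by (intro mult_left_mono) (auto simp: \<Psi>_def K_def)
    also have "\<dots> < N0" by (rule \<delta>(2))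
    finally have "cmod (exp_val V E d D T p A Op y - of_real N0) < N0" .
    then show "Re (exp_val V E d D T p A Op y) > 0"
      using abs_Re_le_cmod[of "exp_val V E d D T p A Op y - of_real N0"] by simp
  qed
qed

lemma edge_ends:
  assumes "e = {u, w}" and "u \<noteq> w"
  shows "end1 e \<noteq> end2 e" and "e = {end1 e, end2 e}"
proof -
  have end1: "end1 e \<in> e" unfolding end1_def by (rule someI[of _ u]) (simp add: assms(1))
  have "\<exists>w'. w' \<in> e \<and> w' \<noteq> end1 e"
  proof (cases "end1 e = u")
    case True
    then show ?thesis using assms by (intro exI[of _ w]) simp
  next
    case False
    then show ?thesis using assms by (intro exI[of _ u]) simp
  qed
  then have end2: "end2 e \<in> e \<and> end2 e \<noteq> end1 e" unfolding end2_def by (rule someI_ex)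
  then show "end1 e \<noteq> end2 e" by (metis not_sym)
  have "end1 e \<in> {u, w}" "end2 e \<in> {u, w}" using end1 end2 assms(1) by auto
  then have "end1 e = u \<and> end2 e = w \<or> end1 e = w \<and> end2 e = u" using end2 by blast
  then show "e = {end1 e, end2 e}" using assms(1) by (metis insert_commute)
qed

definition incoming_msg :: "('v \<Rightarrow> 'v \<Rightarrow> nat \<times> nat \<Rightarrow> complex) \<Rightarrow> 'v set \<Rightarrow> 'v \<Rightarrow> nat \<times> nat \<Rightarrow> complex" where
  "incoming_msg mu e v = (if v = end1 e then mu (end2 e) (end1 e) else mu (end1 e) (end2 e))"

lemma rank1_eq_prod_incoming_msg:
  assumes "end1 e \<noteq> end2 e" and "e = {end1 e, end2 e}"
  shows "rank1 D mu e h = (\<Prod>v\<in>e. incoming_msg mu e v (h (v, e))) / bp_I D mu (end1 e) (end2 e)"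
proof -
  have "(\<Prod>v\<in>e. incoming_msg mu e v (h (v, e))) = (\<Prod>v\<in>{end1 e, end2 e}. incoming_msg mu e v (h (v, e)))"
    using arg_cong[OF assms(2), of "prod (\<lambda>v. incoming_msg mu e v (h (v, e)))"] .
  then show ?thesis using assms(1) by (simp add: rank1_def incoming_msg_def)
qed

lemma perp_cong:
  assumes "h (end1 e, e) = h' (end1 e, e)" and "h (end2 e, e) = h' (end2 e, e)"
  shows "perp D mu e h = perp D mu e h'"
  using assms by (simp add: perp_def rank1_def)

lemma local_norm_cong:
  assumes "\<And>e. e \<in> incident E v \<Longrightarrow> y e = y' e"
  shows "local_norm E d T v y = local_norm E d T v y'"
proof -
  have "restrict (\<lambda>e. fst (y e)) (incident E v) = restrict (\<lambda>e. fst (y' e)) (incident E v)"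
    and "restrict (\<lambda>e. snd (y e)) (incident E v) = restrict (\<lambda>e. snd (y' e)) (incident E v)"
    using assms by (auto simp: fun_eq_iff)
  then show ?thesis unfolding local_norm_def by simp
qed

lemma block_tensor_cong:
  assumes "\<And>v e. v \<in> S \<Longrightarrow> e \<in> incident E v \<Longrightarrow> h (v, e) = h' (v, e)"
  shows "block_tensor E d T S M h = block_tensor E d T S M h'"
proof -
  have "restrict (\<lambda>e. fst (h (v, e))) (incident E v) = restrict (\<lambda>e. fst (h' (v, e))) (incident E v)"
    and "restrict (\<lambda>e. snd (h (v, e))) (incident E v) = restrict (\<lambda>e. snd (h' (v, e))) (incident E v)"
    if "v \<in> S" for v
    using assms[OF that] by (auto simp: fun_eq_iff)
  then show ?thesis unfolding block_tensor_def by (intro sum.cong prod.cong refl arg_cong2[where f = "(*)"]) auto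
qed

lemma block_tensor_holomorphic:
  assumes "finite S"
  shows "(\<lambda>z. block_tensor E d T S (\<lambda>a b. z * M a b) h) holomorphic_on UNIV"
  using mat_exp_affine_holomorphic[OF finite_cfg[OF assms], where N = "\<lambda>_ _. 0"]
  unfolding block_tensor_def by (intro holomorphic_intros) auto

lemma sum_PiE_Un_mult:
  fixes P Q :: "('a \<Rightarrow> 'b) \<Rightarrow> 'c::comm_semiring_1"
  assumes "finite I" and "finite J" and "I \<inter> J = {}"
    and P: "\<And>h h'. \<forall>x\<in>I. h x = h' x \<Longrightarrow> P h = P h'"
    and Q: "\<And>h h'. \<forall>x\<in>J. h x = h' x \<Longrightarrow> Q h = Q h'"
  shows "(\<Sum>h\<in>PiE (I \<union> J) S. P h * Q h) = (\<Sum>h\<in>PiE I S. P h) * (\<Sum>h\<in>PiE J S. Q h)"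
proof -
  have "(\<Sum>h\<in>PiE (I \<union> J) S. P h * Q h) = (\<Sum>(h, h')\<in>PiE I S \<times> PiE J S. P h * Q h')"
  proof (rule sum.reindex_bij_witness[where i = "merge I J" and j = "\<lambda>h. (restrict h I, restrict h J)"])
    fix h assume "h \<in> PiE (I \<union> J) S"
    then show "merge I J (restrict h I, restrict h J) = h"
      and "(restrict h I, restrict h J) \<in> PiE I S \<times> PiE J S"
      by (auto simp: merge_def fun_eq_iff PiE_def extensional_def)
    show "(case (restrict h I, restrict h J) of (h, h') \<Rightarrow> P h * Q h') = P h * Q h"
      using P[of "restrict h I" h] Q[of "restrict h J" h] by simp
  next
    fix hh assume "hh \<in> PiE I S \<times> PiE J S"
    then show "(restrict (merge I J hh) I, restrict (merge I J hh) J) = hh"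
      and "merge I J hh \<in> PiE (I \<union> J) S"
      using assms(3) by (auto simp: merge_def fun_eq_iff PiE_def extensional_def)
  qed
  then show ?thesis by (simp add: sum.cartesian_product[symmetric] sum_product)
qed

section \<open>Decoupling a block from the projected network\<close>

locale blocked_network =
  fixes V :: "'v set" and E :: "'v set set" and d :: "'v \<Rightarrow> nat" and D :: "'v set \<Rightarrow> nat"
    and T :: "'v \<Rightarrow> nat \<Rightarrow> ('v set \<Rightarrow> nat) \<Rightarrow> complex"
    and mu :: "'v \<Rightarrow> 'v \<Rightarrow> nat \<times> nat \<Rightarrow> complex"
    and p :: nat and A :: "nat \<Rightarrow> 'v set"
    and Op :: "nat \<Rightarrow> ('v \<Rightarrow> nat) \<Rightarrow> ('v \<Rightarrow> nat) \<Rightarrow> complex"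
  assumes finite_V: "finite V"
    and graph: "E \<subseteq> {{u, w} | u w. u \<in> V \<and> w \<in> V \<and> u \<noteq> w}"
    and A_sub: "\<forall>i<p. A i \<subseteq> V"
    and A_disj: "\<forall>i<p. \<forall>j<p. i \<noteq> j \<longrightarrow> A i \<inter> A j = {}"
begin

abbreviation "Zt \<equiv> Ztilde V E d D T mu p A Op"

lemma edge_ends_E:
  assumes "e \<in> E"
  shows "end1 e \<noteq> end2 e" and "e = {end1 e, end2 e}" and "end1 e \<in> e" and "end2 e \<in> e"
proof -
  obtain u w where "e = {u, w}" "u \<noteq> w" using assms graph by blast
  then show "end1 e \<noteq> end2 e" and *: "e = {end1 e, end2 e}" by (rule edge_ends)+
  show "end1 e \<in> e" and "end2 e \<in> e" by (subst *; simp)+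
qed

definition half_edges_in :: "nat \<Rightarrow> ('v \<times> 'v set) set" where
  "half_edges_in j = {(v, e). e \<in> E \<and> v \<in> e \<and> v \<in> A j}"

definition half_edges_out :: "nat \<Rightarrow> ('v \<times> 'v set) set" where
  "half_edges_out j = {(v, e). e \<in> E \<and> v \<in> e \<and> v \<notin> A j}"

lemma finite_half_edges: "finite (half_edges_in j)" "finite (half_edges_out j)"
proof -
  have "finite (V \<times> E)" using finite_V graph by (auto intro: finite_subset[of E "Pow V"])
  moreover have "half_edges_in j \<subseteq> V \<times> E" "half_edges_out j \<subseteq> V \<times> E"
    using graph by (auto simp: half_edges_in_def half_edges_out_def)
  ultimately show "finite (half_edges_in j)" "finite (half_edges_out j)" by (auto intro: finite_subset)
qed

lemma hconfs_eq_PiE_half_edges: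
  "hconfs E D = PiE (half_edges_in j \<union> half_edges_out j) (\<lambda>(v, e). dd D e)"
  unfolding hconfs_def half_edges_in_def half_edges_out_def by (rule arg_cong2[where f = PiE]) auto

text \<open>On an edge outside \<open>F\<close> the rank-one projector is the product of the messages entering its
  two endpoints; the factors at endpoints in \<open>A j\<close> go with the block, the others with the rest.\<close>
definition block_factor :: "nat \<Rightarrow> complex \<Rightarrow> ('v \<times> 'v set \<Rightarrow> nat \<times> nat) \<Rightarrow> complex" where
  "block_factor j z h = block_tensor E d T (A j) (\<lambda>a b. z * Op j a b) h
     * (\<Prod>e\<in>E. \<Prod>v\<in>e \<inter> A j. incoming_msg mu e v (h (v, e)))"

definition complement_factor :: "nat \<Rightarrow> 'v set set \<Rightarrow> (nat \<Rightarrow> real) \<Rightarrow> ('v \<times> 'v set \<Rightarrow> nat \<times> nat) \<Rightarrow> complex" where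
  "complement_factor j F lam h =
     (\<Prod>v\<in>V - (\<Union>i<p. A i). local_norm E d T v (\<lambda>e. h (v, e)))
   * (\<Prod>i\<in>{..<p} - {j}. block_tensor E d T (A i) (\<lambda>a b. of_real (lam i) * Op i a b) h)
   * (\<Prod>e\<in>E. if e \<in> F then perp D mu e h
       else (\<Prod>v\<in>e - A j. incoming_msg mu e v (h (v, e))) / bp_I D mu (end1 e) (end2 e))"

definition block_contraction :: "nat \<Rightarrow> complex \<Rightarrow> complex" where
  "block_contraction j z = (\<Sum>h\<in>PiE (half_edges_in j) (\<lambda>(v, e). dd D e). block_factor j z h)"

definition complement_contraction :: "nat \<Rightarrow> 'v set set \<Rightarrow> (nat \<Rightarrow> real) \<Rightarrow> complex" where
  "complement_contraction j F lam =
     (\<Sum>h\<in>PiE (half_edges_out j) (\<lambda>(v, e). dd D e). complement_factor j F lam h)"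

lemma block_factor_cong:
  assumes "\<forall>x\<in>half_edges_in j. h x = h' x"
  shows "block_factor j z h = block_factor j z h'"
  unfolding block_factor_def
proof (intro arg_cong2[where f = "(*)"] block_tensor_cong prod.cong refl)
  show "h (v, e) = h' (v, e)" if "v \<in> A j" "e \<in> incident E v" for v e
    using assms that by (auto simp: half_edges_in_def incident_def)
  show "incoming_msg mu e v (h (v, e)) = incoming_msg mu e v (h' (v, e))" if "e \<in> E" "v \<in> e \<inter> A j" for e v
    using assms that by (auto simp: half_edges_in_def)
qed

lemma complement_factor_cong:
  assumes "j < p" and F: "\<Union>F \<inter> A j = {}" and agree: "\<forall>x\<in>half_edges_out j. h x = h' x"
  shows "complement_factor j F lam h = complement_factor j F lam h'"
  unfolding complement_factor_def
proof (intro arg_cong2[where f = "(*)"] prod.cong refl local_norm_cong block_tensor_cong if_cong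
    perp_cong arg_cong2[where f = "(/)"])
  show "h (v, e) = h' (v, e)" if "v \<in> V - (\<Union>i<p. A i)" "e \<in> incident E v" for v e
    using agree that \<open>j < p\<close> by (auto simp: half_edges_out_def incident_def)
  show "h (v, e) = h' (v, e)" if "i \<in> {..<p} - {j}" "v \<in> A i" "e \<in> incident E v" for i v e
  proof -
    have "v \<notin> A j" using A_disj that(1,2) \<open>j < p\<close> by blast
    then show ?thesis using agree that(3) by (auto simp: half_edges_out_def incident_def)
  qed
  show "h (end1 e, e) = h' (end1 e, e)" and "h (end2 e, e) = h' (end2 e, e)" if "e \<in> E" "e \<in> F" for e
    using agree that F edge_ends_E(3,4)[OF \<open>e \<in> E\<close>] by (auto simp: half_edges_out_def)
  show "incoming_msg mu e v (h (v, e)) = incoming_msg mu e v (h' (v, e))" if "e \<in> E" "v \<in> e - A j" for e v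
    using agree that by (auto simp: half_edges_out_def)
qed

lemma Ztilde_summand_eq_mult:
  assumes "j < p" and F: "\<Union>F \<inter> A j = {}"
  shows "(\<Prod>v\<in>V - (\<Union>i<p. A i). local_norm E d T v (\<lambda>e. h (v, e)))
      * (\<Prod>i<p. block_tensor E d T (A i) (\<lambda>a b. of_real (lam i) * Op i a b) h)
      * (\<Prod>e\<in>E. if e \<in> F then perp D mu e h else rank1 D mu e h)
    = block_factor j (of_real (lam j)) h * complement_factor j F lam h"
proof -
  have blocks: "(\<Prod>i<p. block_tensor E d T (A i) (\<lambda>a b. of_real (lam i) * Op i a b) h)
      = block_tensor E d T (A j) (\<lambda>a b. of_real (lam j) * Op j a b) h
      * (\<Prod>i\<in>{..<p} - {j}. block_tensor E d T (A i) (\<lambda>a b. of_real (lam i) * Op i a b) h)"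
    using \<open>j < p\<close> by (simp add: prod.remove)
  have "(if e \<in> F then perp D mu e h else rank1 D mu e h)
      = (\<Prod>v\<in>e \<inter> A j. incoming_msg mu e v (h (v, e)))
      * (if e \<in> F then perp D mu e h
         else (\<Prod>v\<in>e - A j. incoming_msg mu e v (h (v, e))) / bp_I D mu (end1 e) (end2 e))"
    if "e \<in> E" for e
  proof (cases "e \<in> F")
    case True
    then have "e \<inter> A j = {}" using F by blast
    with True show ?thesis by simp
  next
    case False
    have "finite e" by (subst edge_ends_E(2)[OF \<open>e \<in> E\<close>]) simp
    with False show ?thesis
      by (simp add: rank1_eq_prod_incoming_msg[OF edge_ends_E(1,2)[OF \<open>e \<in> E\<close>]] prod.Int_Diff[of e _ "A j"])
  qed
  then have edges: "(\<Prod>e\<in>E. if e \<in> F then perp D mu e h else rank1 D mu e h)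
      = (\<Prod>e\<in>E. \<Prod>v\<in>e \<inter> A j. incoming_msg mu e v (h (v, e)))
      * (\<Prod>e\<in>E. if e \<in> F then perp D mu e h
         else (\<Prod>v\<in>e - A j. incoming_msg mu e v (h (v, e))) / bp_I D mu (end1 e) (end2 e))"
    by (simp add: prod.distrib[symmetric])
  show ?thesis
    unfolding blocks edges block_factor_def complement_factor_def by (simp only: mult_ac)
qed

lemma Ztilde_eq_block_mult_complement:
  assumes "j < p" and "\<Union>F \<inter> A j = {}"
  shows "Zt F lam = block_contraction j (of_real (lam j)) * complement_contraction j F lam"
proof -
  have "Zt F lam = (\<Sum>h\<in>PiE (half_edges_in j \<union> half_edges_out j) (\<lambda>(v, e). dd D e).
      block_factor j (of_real (lam j)) h * complement_factor j F lam h)"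
    unfolding Ztilde_def hconfs_eq_PiE_half_edges[of j] Ztilde_summand_eq_mult[OF assms] ..
  also have "\<dots> = block_contraction j (of_real (lam j)) * complement_contraction j F lam"
    unfolding block_contraction_def complement_contraction_def
    using complement_factor_cong[OF assms]
    by (intro sum_PiE_Un_mult finite_half_edges block_factor_cong)
       (auto simp: half_edges_in_def half_edges_out_def)
  finally show ?thesis .
qed

lemma block_contraction_holomorphic:
  assumes "j < p"
  shows "block_contraction j holomorphic_on UNIV"
proof -
  have "finite (A j)" using A_sub assms finite_V finite_subset by blast
  then show ?thesis
    unfolding block_contraction_def block_factor_def
    by (intro holomorphic_intros block_tensor_holomorphic)
qed

lemma complement_contraction_fun_upd: "complement_contraction j F (lam(j := t)) = complement_contraction j F lam"
  unfolding complement_contraction_def complement_factor_def by (intro sum.cong prod.cong refl) auto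

lemma Ztilde_ratio_fun_upd:
  assumes "j < p" and "\<Union>F \<inter> A j = {}" and "Zt {} lam \<noteq> 0" and "Zt {} (lam(j := t)) \<noteq> 0"
  shows "Zt F (lam(j := t)) / Zt {} (lam(j := t)) = Zt F lam / Zt {} lam"
proof -
  have empty: "\<Union>{} \<inter> A j = {}" by simp
  show ?thesis
    using assms(3,4)
    unfolding Ztilde_eq_block_mult_complement[OF assms(1,2)] Ztilde_eq_block_mult_complement[OF assms(1) empty]
    by (simp add: complement_contraction_fun_upd)
qed

lemma mixed_partial_cluster_weight_eq_0:
  assumes "j \<in> set xs" and "j < p" and "\<epsilon> > 0" and nz: "\<forall>lam\<in>nbhd0 p \<epsilon>. Zt {} lam \<noteq> 0"
    and W: "cluster_supp W \<inter> A j = {}"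
  shows "mixed_partial xs (cluster_weight V E d D T mu p A Op W) (\<lambda>_. 0) = 0"
proof -
  define w where "w = cluster_weight V E d D T mu p A Op W"
  have w_indep: "w lam = w (lam(j := 0))" if "lam \<in> nbhd0 p \<epsilon>" for lam
  proof -
    have "lam(j := 0) \<in> nbhd0 p \<epsilon>" using that \<open>\<epsilon> > 0\<close> by (auto simp: nbhd0_def)
    then have "Zt l (lam(j := 0)) / Zt {} (lam(j := 0)) = Zt l lam / Zt {} lam" if "l \<in># W" for l
      using that W nz \<open>lam \<in> nbhd0 p \<epsilon>\<close>
      by (intro Ztilde_ratio_fun_upd \<open>j < p\<close>) (auto simp: cluster_supp_def)
    then show ?thesis unfolding w_def cluster_weight_def by (intro arg_cong[where f = prod_mset] image_mset_cong) simp
  qed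
  have "mixed_partial xs w (\<lambda>_. 0) = mixed_partial xs (\<lambda>lam. w (lam(j := 0))) (\<lambda>_. 0)"
    by (rule mixed_partial_cong_nbhd0[where p = p and \<delta> = \<epsilon>, OF w_indep])
       (use \<open>\<epsilon> > 0\<close> in \<open>auto simp: nbhd0_def\<close>)
  also have "\<dots> = 0"
    using \<open>j \<in> set xs\<close> by (intro mixed_partial_eq_0_if_indep[where j = j]) simp
  finally show ?thesis by (simp add: w_def)
qed

lemma has_vector_derivative_log_Ztilde_empty:
  assumes "k < p" and contL: "continuous_on (nbhd0 p \<epsilon>) L"
    and expL: "\<forall>lam\<in>nbhd0 p \<epsilon>. exp (L lam) = Zt {} lam"
    and y: "y \<in> nbhd0 p \<epsilon>" and nz: "Zt {} y \<noteq> 0"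
  shows "((\<lambda>s. L (y(k := s))) has_vector_derivative
      deriv (block_contraction k) (of_real (y k)) / block_contraction k (of_real (y k))) (at (y k))"
proof -
  define B where "B = block_contraction k"
  define R where "R = complement_contraction k {} y"
  have Zt_line: "Zt {} (y(k := s)) = B (of_real s) * R" for s
    using Ztilde_eq_block_mult_complement[OF \<open>k < p\<close>, of "{}" "y(k := s)"]
    by (simp add: B_def R_def complement_contraction_fun_upd)
  define I where "I = {s::real. \<bar>s\<bar> < \<epsilon>}"
  have "continuous_on I (\<lambda>s. L (y(k := s)))"
  proof (rule continuous_on_compose2[OF contL])
    show "continuous_on I (\<lambda>s. y(k := s))"
    proof (rule continuous_on_coordinatewise_then_product)
      show "continuous_on I (\<lambda>s. (y(k := s)) i)" for i
        by (cases "i = k") (simp_all add: continuous_on_id continuous_on_const)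
    qed
    show "(\<lambda>s. y(k := s)) ` I \<subseteq> nbhd0 p \<epsilon>" using y by (auto simp: I_def nbhd0_def)
  qed
  moreover have "y k \<in> interior I"
  proof -
    have "open I" unfolding I_def by (intro open_Collect_less continuous_intros)
    moreover have "y k \<in> I" using y \<open>k < p\<close> by (simp add: I_def nbhd0_def)
    ultimately show ?thesis by (simp add: interior_open)
  qed
  ultimately have cont: "continuous (at (y k)) (\<lambda>s. L (y(k := s)))"
    by (rule continuous_on_interior)
  have "\<forall>\<^sub>F s in nhds (y k). exp (L (y(k := s))) = B (of_real s) * R"
    using eventually_fun_upd_in_nbhd0[OF y]
  proof eventually_elim
    case (elim s)
    then show ?case using expL Zt_line by simp
  qed
  moreover have "((\<lambda>s. B (of_real s) * R) has_vector_derivative deriv B (of_real (y k)) * R) (at (y k))"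
  proof (rule has_vector_derivative_real_field)
    show "((\<lambda>z. B z * R) has_field_derivative deriv B (of_real (y k)) * R) (at (of_real (y k)))"
      using block_contraction_holomorphic[OF \<open>k < p\<close>]
      by (intro DERIV_cmult_right holomorphic_derivI[of B UNIV]) (simp_all add: B_def)
  qed
  moreover have "B (of_real (y k)) * R \<noteq> 0" using nz Zt_line[of "y k"] by simp
  ultimately have "((\<lambda>s. L (y(k := s))) has_vector_derivative
      deriv B (of_real (y k)) * R / (B (of_real (y k)) * R)) (at (y k))"
    by (rule has_vector_derivative_continuous_log[OF cont])
  then show ?thesis using \<open>B (of_real (y k)) * R \<noteq> 0\<close> by (simp add: B_def)
qed

lemma partial_Ln_exp_val:
  assumes "k < p" and contL: "continuous_on (nbhd0 p \<epsilon>) L"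
    and hyps: "\<forall>lam\<in>nbhd0 p \<epsilon>. Zt {} lam \<noteq> 0 \<and> exp (L lam) = Zt {} lam
      \<and> Ln (exp_val V E d D T p A Op lam) = L lam + S lam"
    and pos: "\<forall>lam\<in>nbhd0 p \<epsilon>. Re (exp_val V E d D T p A Op lam) > 0"
    and y: "y \<in> nbhd0 p \<epsilon>"
  shows "mixed_partial [k] (\<lambda>lam. Ln (exp_val V E d D T p A Op lam)) y
    = deriv (block_contraction k) (of_real (y k)) / block_contraction k (of_real (y k))
      + mixed_partial [k] S y"
proof -
  define \<phi> where "\<phi> = deriv (block_contraction k) (of_real (y k)) / block_contraction k (of_real (y k))"
  define Fn where "Fn lam = Ln (exp_val V E d D T p A Op lam)" for lam
  obtain f where f: "f holomorphic_on UNIV"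
    and f_line: "\<And>t. exp_val V E d D T p A Op (y(k := t)) = f (of_real t)"
    using exp_val_coordinate_line[OF finite_V \<open>k < p\<close>] by blast
  define G where "G = deriv f (of_real (y k)) / f (of_real (y k))"
  have "Re (f (of_real (y k))) > 0" using pos y f_line[of "y k"] by force
  then have dFn: "((\<lambda>s. Fn (y(k := s))) has_vector_derivative G) (at (y k))"
    unfolding Fn_def f_line G_def by (rule has_vector_derivative_Ln_real_line[OF f])
  have "Zt {} y \<noteq> 0" using hyps y by blast
  then have dL: "((\<lambda>s. L (y(k := s))) has_vector_derivative \<phi>) (at (y k))"
    unfolding \<phi>_def using hyps y
    by (intro has_vector_derivative_log_Ztilde_empty[OF \<open>k < p\<close> contL]) auto
  have ev: "\<forall>\<^sub>F s in nhds (y k). s \<in> UNIV \<longrightarrow> Fn (y(k := s)) - L (y(k := s)) = S (y(k := s))"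
    using eventually_fun_upd_in_nbhd0[OF y]
  proof eventually_elim
    case (elim s)
    then show ?case using hyps by (simp add: Fn_def)
  qed
  moreover have "Fn (y(k := y k)) - L (y(k := y k)) = S (y(k := y k))"
    using eventually_nhds_x_imp_x[OF ev] by blast
  ultimately have dS: "((\<lambda>s. S (y(k := s))) has_vector_derivative G - \<phi>) (at (y k))"
    using has_vector_derivative_diff[OF dFn dL] by (rule has_vector_derivative_cong_ev[THEN iffD1])
  show ?thesis
    using vector_derivative_at[OF dFn] vector_derivative_at[OF dS] by (simp add: \<phi>_def Fn_def)
qed

lemma mixed_partial_Ln_exp_val_eq:
  assumes "2 \<le> p" and "\<epsilon> > 0" and contL: "continuous_on (nbhd0 p \<epsilon>) L"
    and hyps: "\<forall>lam\<in>nbhd0 p \<epsilon>. Zt {} lam \<noteq> 0 \<and> exp (L lam) = Zt {} lam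
      \<and> Ln (exp_val V E d D T p A Op lam) = L lam + S lam"
    and norm_pos: "(\<Sum>s\<in>cfg d V. (cmod (peps_amp V E D T s))\<^sup>2) > 0"
  shows "mixed_partial [0..<p] (\<lambda>lam. Ln (exp_val V E d D T p A Op lam)) (\<lambda>_. 0)
    = mixed_partial [0..<p] S (\<lambda>_. 0)"
proof -
  define Fn where "Fn lam = Ln (exp_val V E d D T p A Op lam)" for lam
  obtain \<delta>0 where "\<delta>0 > 0" and pos: "\<And>y. y \<in> nbhd0 p \<delta>0 \<Longrightarrow> Re (exp_val V E d D T p A Op y) > 0"
    using exp_val_Re_pos_near_0[OF finite_V norm_pos] by blast
  define \<delta> where "\<delta> = min \<epsilon> \<delta>0"
  have sub: "nbhd0 p \<delta> \<subseteq> nbhd0 p \<epsilon>" "nbhd0 p \<delta> \<subseteq> nbhd0 p \<delta>0" by (auto simp: nbhd0_def \<delta>_def)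
  have "mixed_partial [p - 1] Fn y
      = deriv (block_contraction (p - 1)) (of_real (y (p - 1))) / block_contraction (p - 1) (of_real (y (p - 1)))
        + mixed_partial [p - 1] S y" if "y \<in> nbhd0 p \<delta>" for y
    unfolding Fn_def
  proof (rule partial_Ln_exp_val[OF _ continuous_on_subset[OF contL sub(1)] _ _ that])
    show "p - 1 < p" using \<open>2 \<le> p\<close> by simp
    show "\<forall>lam\<in>nbhd0 p \<delta>. Zt {} lam \<noteq> 0 \<and> exp (L lam) = Zt {} lam
        \<and> Ln (exp_val V E d D T p A Op lam) = L lam + S lam"
      using hyps sub(1) by blast
    show "\<forall>lam\<in>nbhd0 p \<delta>. Re (exp_val V E d D T p A Op lam) > 0" using pos sub(2) by blast
  qed
  then have pair: "mixed_partial [p - 2, p - 1] Fn y = mixed_partial [p - 2, p - 1] S y"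
    if "y \<in> nbhd0 p \<delta>" for y
    by (rule mixed_partial_pair_eq_if_diff_single_var) (use \<open>2 \<le> p\<close> that in auto)
  have split: "[0..<p] = [0..<p - 2] @ [p - 2, p - 1]"
    using \<open>2 \<le> p\<close> by (rule upt_eq_append_two_last)
  have "(\<lambda>_. 0) \<in> nbhd0 p \<delta>" using \<open>\<epsilon> > 0\<close> \<open>\<delta>0 > 0\<close> by (simp add: nbhd0_def \<delta>_def)
  then have "mixed_partial [0..<p - 2] (mixed_partial [p - 2, p - 1] Fn) (\<lambda>_. 0)
      = mixed_partial [0..<p - 2] (mixed_partial [p - 2, p - 1] S) (\<lambda>_. 0)"
    by (intro mixed_partial_cong_nbhd0[where p = p and \<delta> = \<delta>] pair)
  then show ?thesis unfolding split mixed_partial_append Fn_def .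
qed

end

theorem mainTheorem11:
  fixes V :: "'v set" and E :: "'v set set" and d :: "'v \<Rightarrow> nat" and D :: "'v set \<Rightarrow> nat"
    and T :: "'v \<Rightarrow> nat \<Rightarrow> ('v set \<Rightarrow> nat) \<Rightarrow> complex"
    and mu :: "'v \<Rightarrow> 'v \<Rightarrow> nat \<times> nat \<Rightarrow> complex"
    and p :: nat and A :: "nat \<Rightarrow> 'v set"
    and Op :: "nat \<Rightarrow> ('v \<Rightarrow> nat) \<Rightarrow> ('v \<Rightarrow> nat) \<Rightarrow> complex"
  assumes finV: "finite V"
    and graph: "E \<subseteq> {{u, w} | u w. u \<in> V \<and> w \<in> V \<and> u \<noteq> w}"
    and norm_pos: "(\<Sum>s\<in>cfg d V. (cmod (peps_amp V E D T s))\<^sup>2) > 0"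
    and bp: "is_bp_fixed_point E d D T mu"
    and I_nz: "\<forall>v w. {v, w} \<in> E \<longrightarrow> bp_I D mu v w \<noteq> 0"
    and p2: "p \<ge> 2"
    and A_sub: "\<forall>i<p. A i \<subseteq> V"
    and A_disj: "\<forall>i<p. \<forall>j<p. i \<noteq> j \<longrightarrow> A i \<inter> A j = {}"
    and expansion: "\<exists>\<epsilon>>0. \<exists>L. continuous_on (nbhd0 p \<epsilon>) L \<and>
        (\<forall>lam\<in>nbhd0 p \<epsilon>.
           Ztilde V E d D T mu p A Op {} lam \<noteq> 0 \<and>
           exp (L lam) = Ztilde V E d D T mu p A Op {} lam \<and>
           (\<lambda>W. complex_of_real (ursell W) * cluster_weight V E d D T mu p A Op W lam)
              summable_on conn_clusters E p A \<and>
           Ln (exp_val V E d D T p A Op lam) = L lam +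
              (\<Sum>\<^sub>\<infinity>W\<in>conn_clusters E p A.
                 complex_of_real (ursell W) * cluster_weight V E d D T mu p A Op W lam))"
    and termwise: "((\<lambda>W. complex_of_real (ursell W)
                      * mixed_partial [0..<p] (cluster_weight V E d D T mu p A Op W) (\<lambda>_. 0))
        has_sum (mixed_partial [0..<p]
                  (\<lambda>lam. \<Sum>\<^sub>\<infinity>W\<in>conn_clusters E p A.
                     complex_of_real (ursell W) * cluster_weight V E d D T mu p A Op W lam)
                  (\<lambda>_. 0)))
        (conn_clusters E p A)"
  shows "((\<lambda>W. complex_of_real (ursell W)
              * mixed_partial [0..<p] (cluster_weight V E d D T mu p A Op W) (\<lambda>_. 0))
         has_sum conn_corr V E d D T p A Op)
         {W \<in> conn_clusters E p A. \<forall>i<p. cluster_supp W \<inter> A i \<noteq> {}}"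
proof -
  interpret blocked_network V E d D T mu p A Op
    using finV graph A_sub A_disj by unfold_locales
  define S where "S lam = (\<Sum>\<^sub>\<infinity>W\<in>conn_clusters E p A.
      complex_of_real (ursell W) * cluster_weight V E d D T mu p A Op W lam)" for lam
  obtain \<epsilon> L where "\<epsilon> > 0" and contL: "continuous_on (nbhd0 p \<epsilon>) L"
    and props: "\<forall>lam\<in>nbhd0 p \<epsilon>. Zt {} lam \<noteq> 0 \<and> exp (L lam) = Zt {} lam
      \<and> Ln (exp_val V E d D T p A Op lam) = L lam + S lam"
    using expansion unfolding S_def by blast
  have "conn_corr V E d D T p A Op = mixed_partial [0..<p] S (\<lambda>_. 0)"
    unfolding conn_corr_def by (rule mixed_partial_Ln_exp_val_eq[OF p2 \<open>\<epsilon> > 0\<close> contL props norm_pos])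
  with termwise have sum_all: "((\<lambda>W. complex_of_real (ursell W)
      * mixed_partial [0..<p] (cluster_weight V E d D T mu p A Op W) (\<lambda>_. 0))
      has_sum conn_corr V E d D T p A Op) (conn_clusters E p A)"
    by (simp add: S_def[abs_def])
  have "mixed_partial [0..<p] (cluster_weight V E d D T mu p A Op W) (\<lambda>_. 0) = 0"
    if misses: "\<not> (\<forall>i<p. cluster_supp W \<inter> A i \<noteq> {})" for W
  proof -
    obtain j where "j < p" and "cluster_supp W \<inter> A j = {}" using misses by blast
    then show ?thesis
      using props \<open>\<epsilon> > 0\<close> by (intro mixed_partial_cluster_weight_eq_0) auto
  qed
  then show ?thesis
    by (intro has_sum_cong_neutral[THEN iffD2, OF _ _ _ sum_all]) auto
qed

end
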